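(* Let $(R,\mathfrak m)$ be a Noetherian local ring, $X$ a finitely generated $R$-module, $N$ a Burch submodule of $X$, $t\ge1$ an integer, and $M$ a finitely generated $R$-module with $\operatorname{Tor}_t^R(M,X/N)=\operatorname{Tor}_{t+1}^R(M,X/N)=0$. Then $\operatorname{pd}_R M<t$. (In particular, for $X=R$: if $I$ is an ideal with $\mathfrak m I:_R\mathfrak m\neq I:_R\mathfrak m$ and $\operatorname{Tor}_t^R(R/I,M)=\operatorname{Tor}_{t+1}^R(R/I,M)=0$ for some $t\ge1$, then $\operatorname{pd}_RM<t$.)
   Context: For a submodule $N\subseteq X$, $(N:_X\mathfrak m)=\{x\in X:\mathfrak m x\subseteq N\}$. $N$ is a Burch submodule of $X$ if $\mathfrak m(N:_X\mathfrak m)\neq\mathfrak m N$. The projective dimension of the zero module is $-\infty$. *)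

theory Defs
  imports Main "HOL.Modules" "HOL-Library.Function_Algebras"
begin

definition is_ideal :: "'a::comm_ring_1 set \<Rightarrow> bool" where
  "is_ideal I \<longleftrightarrow> 0 \<in> I \<and> (\<forall>x\<in>I. \<forall>y\<in>I. x + y \<in> I) \<and> (\<forall>r. \<forall>x\<in>I. r * x \<in> I)"

definition noetherian_ring :: "'a::comm_ring_1 itself \<Rightarrow> bool" where
  "noetherian_ring _ \<longleftrightarrow> (\<forall>I::'a set. is_ideal I \<longrightarrow>
      (\<exists>S. finite S \<and> S \<subseteq> I \<and> I = {\<Sum>s\<in>S. c s * s | c. True}))"

text \<open>The set of non-units; R is local iff it is a (proper) ideal, which is then the unique
  maximal ideal.\<close>
definition max_ideal :: "'a::comm_ring_1 set" where
  "max_ideal = {x. \<not> x dvd 1}"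

definition local_ring :: "'a::comm_ring_1 itself \<Rightarrow> bool" where
  "local_ring _ \<longleftrightarrow> (0::'a) \<noteq> 1 \<and> is_ideal (max_ideal :: 'a set)"

section \<open>Modules (the whole carrier type, with scalar multiplication sc)\<close>

definition fin_gen :: "('a::comm_ring_1 \<Rightarrow> 'b::ab_group_add \<Rightarrow> 'b) \<Rightarrow> bool" where
  "fin_gen sc \<longleftrightarrow> (\<exists>S. finite S \<and> module.span sc S = UNIV)"

definition colon_sub :: "('a::comm_ring_1 \<Rightarrow> 'b::ab_group_add \<Rightarrow> 'b) \<Rightarrow> 'b set \<Rightarrow> 'a set \<Rightarrow> 'b set" where
  "colon_sub sc N I = {x. \<forall>r\<in>I. sc r x \<in> N}"

definition prod_sub :: "('a::comm_ring_1 \<Rightarrow> 'b::ab_group_add \<Rightarrow> 'b) \<Rightarrow> 'a set \<Rightarrow> 'b set \<Rightarrow> 'b set" where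
  "prod_sub sc I S = module.span sc {sc r x | r x. r \<in> I \<and> x \<in> S}"

definition burch_submodule :: "('a::comm_ring_1 \<Rightarrow> 'b::ab_group_add \<Rightarrow> 'b) \<Rightarrow> 'b set \<Rightarrow> bool" where
  "burch_submodule sc N \<longleftrightarrow>
     prod_sub sc max_ideal (colon_sub sc N max_ideal) \<noteq> prod_sub sc max_ideal N"

text \<open>Elements of Y^n represented as functions nat => Y vanishing from index n on.\<close>
definition vecs :: "nat \<Rightarrow> (nat \<Rightarrow> 'b::zero) set" where
  "vecs n = {v. \<forall>i\<ge>n. v i = 0}"

definition mat_app :: "('a \<Rightarrow> 'b \<Rightarrow> 'b) \<Rightarrow> nat \<Rightarrow> (nat \<Rightarrow> nat \<Rightarrow> 'a) \<Rightarrow> (nat \<Rightarrow> 'b) \<Rightarrow> (nat \<Rightarrow> 'b::comm_monoid_add)" where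
  "mat_app sc n A v = (\<lambda>i. \<Sum>j<n. sc (A i j) (v j))"

definition vscale :: "'a::comm_ring_1 \<Rightarrow> (nat \<Rightarrow> 'a) \<Rightarrow> (nat \<Rightarrow> 'a)" where
  "vscale r v = (\<lambda>i. r * v i)"

definition lin_on :: "('a::comm_ring_1 \<Rightarrow> 'b::ab_group_add \<Rightarrow> 'b) \<Rightarrow> ('a \<Rightarrow> 'c::ab_group_add \<Rightarrow> 'c)
    \<Rightarrow> 'b set \<Rightarrow> ('b \<Rightarrow> 'c) \<Rightarrow> bool" where
  "lin_on sc1 sc2 A f \<longleftrightarrow> (\<forall>x\<in>A. \<forall>y\<in>A. f (x + y) = f x + f y) \<and> (\<forall>r. \<forall>x\<in>A. f (sc1 r x) = sc2 r (f x))"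

text \<open>A free resolution  ... -> R^(b 2) -d 2-> R^(b 1) -d 1-> R^(b 0) -eps-> M -> 0
  of M by finitely generated free modules; d k is a b(k-1) x b(k) matrix.\<close>
definition free_res :: "('a::comm_ring_1 \<Rightarrow> 'c::ab_group_add \<Rightarrow> 'c) \<Rightarrow> (nat \<Rightarrow> nat)
    \<Rightarrow> (nat \<Rightarrow> nat \<Rightarrow> nat \<Rightarrow> 'a) \<Rightarrow> ((nat \<Rightarrow> 'a) \<Rightarrow> 'c) \<Rightarrow> bool" where
  "free_res scM b d eps \<longleftrightarrow>
     (\<forall>k\<ge>1. \<forall>i j. i \<ge> b (k - 1) \<longrightarrow> d k i j = 0) \<and>
     lin_on vscale scM (vecs (b 0)) eps \<and>
     eps ` vecs (b 0) = UNIV \<and>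
     (\<forall>x\<in>vecs (b 0). eps x = 0 \<longleftrightarrow> x \<in> mat_app (*) (b 1) (d 1) ` vecs (b 1)) \<and>
     (\<forall>k\<ge>1. \<forall>x\<in>vecs (b k). mat_app (*) (b k) (d k) x = 0 \<longleftrightarrow>
         x \<in> mat_app (*) (b (Suc k)) (d (Suc k)) ` vecs (b (Suc k)))"

text \<open>Tor_t(M, X/N) = 0 (t >= 1), computed as the homology in degree t of the complex
  F \<otimes> X/N = ((X/N)^(b k), d k), where F = (b,d) is the given free resolution of M and X is the
  whole carrier type of sc.\<close>
definition tor_quot_vanishes :: "('a::comm_ring_1 \<Rightarrow> 'b::ab_group_add \<Rightarrow> 'b) \<Rightarrow> (nat \<Rightarrow> nat)
    \<Rightarrow> (nat \<Rightarrow> nat \<Rightarrow> nat \<Rightarrow> 'a) \<Rightarrow> 'b set \<Rightarrow> nat \<Rightarrow> bool" where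
  "tor_quot_vanishes sc b d N t \<longleftrightarrow>
     (\<forall>y\<in>vecs (b t). (\<forall>i. mat_app sc (b t) (d t) y i \<in> N) \<longrightarrow>
        (\<exists>z\<in>vecs (b (Suc t)). \<exists>w\<in>vecs (b t). (\<forall>i. w i \<in> N) \<and>
            y = mat_app sc (b (Suc t)) (d (Suc t)) z + w))"

text \<open>A submodule P of R^n is (finitely generated) projective iff it is a direct summand
  (retract) of a finite free module R^m.\<close>
definition fg_projective :: "nat \<Rightarrow> (nat \<Rightarrow> 'a::comm_ring_1) set \<Rightarrow> bool" where
  "fg_projective n P \<longleftrightarrow> P \<subseteq> vecs n \<and> module.subspace vscale P \<and>
     (\<exists>m s r. (\<forall>x\<in>P. s x \<in> vecs m) \<and> (\<forall>y\<in>vecs m. r y \<in> P) \<and>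
        lin_on vscale vscale P s \<and> lin_on vscale vscale (vecs m) r \<and> (\<forall>x\<in>P. r (s x) = x))"

text \<open>pd_R M < t: M has a projective resolution 0 -> P_(t-1) -> ... -> P_0 -> M -> 0
  (by finitely generated projectives).  For M = 0 this holds for every t >= 1
  (pd 0 = -infinity).\<close>
definition pd_less :: "('a::comm_ring_1 \<Rightarrow> 'c::ab_group_add \<Rightarrow> 'c) \<Rightarrow> nat \<Rightarrow> bool" where
  "pd_less scM t \<longleftrightarrow> (\<exists>(n::nat \<Rightarrow> nat) (P::nat \<Rightarrow> (nat \<Rightarrow> 'a) set) f eps.
     (\<forall>k. fg_projective (n k) (P k)) \<and>
     (\<forall>k\<ge>t. P k = {0}) \<and>
     (\<forall>k\<ge>1. (\<forall>x\<in>P k. f k x \<in> P (k - 1)) \<and> lin_on vscale vscale (P k) (f k)) \<and>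
     lin_on vscale scM (P 0) eps \<and> eps ` P 0 = UNIV \<and>
     (\<forall>x\<in>P 0. eps x = 0 \<longleftrightarrow> x \<in> f 1 ` P 1) \<and>
     (\<forall>k\<ge>1. \<forall>x\<in>P k. f k x = 0 \<longleftrightarrow> x \<in> f (Suc k) ` P (Suc k)))"

end

theory Submission
  imports Defs
begin

text \<open>Write \<open>t = s + 1\<close>. The Burch condition yields \<open>a \<in> \<m>\<close> and \<open>x \<in> (N :\<^sub>X \<m>)\<close> with
  \<open>a x \<notin> \<m>N\<close>. Testing the vanishing of \<open>Tor\<^sub>t(M, X/N)\<close> and \<open>Tor\<^sub>t\<^sub>+\<^sub>1(M, X/N)\<close> against \<open>x\<close>
  shows that every \<open>v \<in> F\<^sub>t\<close> with \<open>d\<^sub>t v \<in> \<m>F\<^sub>s\<close> is congruent modulo \<open>\<m>\<close> to a cycle, i.e.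
  \<open>ker d\<^sub>t \<rightarrow> ker (d\<^sub>t \<otimes> R/\<m>)\<close> is onto. Gaussian elimination with unit pivots, together with
  Nakayama's lemma, turns this into a splitting: the image of \<open>d\<^sub>t\<close> is a direct summand of \<open>F\<^sub>s\<close>.
  Its complement \<open>C\<close> is projective and \<open>0 \<rightarrow> C \<rightarrow> F\<^sub>s\<^sub>-\<^sub>1 \<rightarrow> \<dots> \<rightarrow> F\<^sub>0 \<rightarrow> M \<rightarrow> 0\<close> is exact, so
  \<open>pd M \<le> s < t\<close>.\<close>

section \<open>Local rings and Nakayama's lemma\<close>

lemma ideal_add: "is_ideal I \<Longrightarrow> x \<in> I \<Longrightarrow> y \<in> I \<Longrightarrow> x + y \<in> I"
  by (simp add: is_ideal_def)

lemma ideal_mult: "is_ideal I \<Longrightarrow> x \<in> I \<Longrightarrow> r * x \<in> I"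
  by (simp add: is_ideal_def)

lemma ideal_zero: "is_ideal I \<Longrightarrow> 0 \<in> I"
  by (simp add: is_ideal_def)

lemma unit_of_not_max_ideal: "(x::'a::comm_ring_1) \<notin> max_ideal \<Longrightarrow> \<exists>g. g * x = 1"
  unfolding max_ideal_def by (auto elim!: dvdE simp: mult.commute)

lemma one_minus_max_ideal:
  assumes "is_ideal (max_ideal::'a::comm_ring_1 set)" and "\<mu> \<in> (max_ideal::'a set)"
  shows "1 - \<mu> \<notin> max_ideal"
proof
  assume "1 - \<mu> \<in> max_ideal"
  then have "(1 - \<mu>) + \<mu> \<in> max_ideal" using assms ideal_add by blast
  then show False by (simp add: max_ideal_def)
qed

lemma sum_mult_delta:
  "finite T \<Longrightarrow> j \<in> T \<Longrightarrow> (\<Sum>k\<in>T. f k * (if k = j then 1 else 0)) = (f j::'a::comm_ring_1)"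
  by (simp add: if_distrib[of "(*) _"] sum.delta cong: if_cong)

text \<open>Nakayama's lemma for \<open>R\<^sup>T\<close>: eliminate one coordinate at a time, using that the diagonal
  entry \<open>1 - \<mu> p p\<close> is a unit.\<close>
lemma max_ideal_matrix_fixed_point_zero:
  fixes \<mu> :: "nat \<Rightarrow> nat \<Rightarrow> 'a::comm_ring_1"
  assumes mi: "is_ideal (max_ideal::'a set)" and "finite T"
    and "\<forall>j\<in>T. \<forall>k\<in>T. \<mu> j k \<in> max_ideal"
    and "\<forall>j\<in>T. \<beta> j = (\<Sum>k\<in>T. \<mu> j k * \<beta> k)"
  shows "\<forall>j\<in>T. \<beta> j = 0"
  using assms(2-)
proof (induction T arbitrary: \<mu> rule: finite_induct)
  case empty then show ?case by simp
next
  case (insert p T)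
  have expand: "\<beta> j = (\<Sum>k\<in>T. \<mu> j k * \<beta> k) + \<mu> j p * \<beta> p" if "j \<in> insert p T" for j
  proof -
    have "\<beta> j = (\<Sum>k\<in>insert p T. \<mu> j k * \<beta> k)" using insert.prems(2) that by blast
    then show ?thesis using insert.hyps by (simp add: add.commute)
  qed
  obtain g where g: "g * (1 - \<mu> p p) = 1"
    using unit_of_not_max_ideal one_minus_max_ideal[OF mi] insert.prems(1) by blast
  have "(1 - \<mu> p p) * \<beta> p = (\<Sum>k\<in>T. \<mu> p k * \<beta> k)"
    using expand[of p] by (simp add: algebra_simps)
  then have "g * ((1 - \<mu> p p) * \<beta> p) = g * (\<Sum>k\<in>T. \<mu> p k * \<beta> k)" by simp
  then have \<beta>p: "\<beta> p = (\<Sum>k\<in>T. (g * \<mu> p k) * \<beta> k)"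
    by (simp add: mult.assoc[symmetric] g sum_distrib_left)
  define \<mu>' where "\<mu>' j k = \<mu> j k + \<mu> j p * (g * \<mu> p k)" for j k
  have "\<forall>j\<in>T. \<beta> j = (\<Sum>k\<in>T. \<mu>' j k * \<beta> k)"
  proof
    fix j assume "j \<in> T"
    then have "\<beta> j = (\<Sum>k\<in>T. \<mu> j k * \<beta> k) + \<mu> j p * \<beta> p"
      using expand by blast
    also have "\<dots> = (\<Sum>k\<in>T. \<mu> j k * \<beta> k) + (\<Sum>k\<in>T. \<mu> j p * (g * \<mu> p k) * \<beta> k)"
      by (subst \<beta>p) (simp add: sum_distrib_left mult.assoc)
    also have "\<dots> = (\<Sum>k\<in>T. \<mu>' j k * \<beta> k)"
      unfolding \<mu>'_def distrib_right sum.distrib ..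
    finally show "\<beta> j = (\<Sum>k\<in>T. \<mu>' j k * \<beta> k)" .
  qed
  moreover have "\<forall>j\<in>T. \<forall>k\<in>T. \<mu>' j k \<in> max_ideal"
    using insert.prems(1) unfolding \<mu>'_def by (meson insertCI ideal_add ideal_mult mi)
  ultimately have "\<forall>j\<in>T. \<beta> j = 0" using insert.IH by blast
  with \<beta>p show ?case by simp
qed

section \<open>Splitting off the image of a matrix\<close>

definition mat_on :: "nat set \<Rightarrow> nat set \<Rightarrow> (nat \<Rightarrow> nat \<Rightarrow> 'a) \<Rightarrow> (nat \<Rightarrow> 'a) \<Rightarrow> nat \<Rightarrow> 'a::comm_ring_1" where
  "mat_on S T B v = (\<lambda>i. if i \<in> S then (\<Sum>j\<in>T. B i j * v j) else 0)"

text \<open>The map \<open>ker B \<rightarrow> ker (B \<otimes> R/\<m>)\<close> is onto.\<close>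
definition kernel_lifts_mod_max :: "nat set \<Rightarrow> nat set \<Rightarrow> (nat \<Rightarrow> nat \<Rightarrow> 'a::comm_ring_1) \<Rightarrow> bool" where
  "kernel_lifts_mod_max S T B \<longleftrightarrow> (\<forall>v. (\<forall>i\<in>S. (\<Sum>j\<in>T. B i j * v j) \<in> max_ideal) \<longrightarrow>
      (\<exists>\<kappa>. (\<forall>i\<in>S. (\<Sum>j\<in>T. B i j * \<kappa> j) = 0) \<and> (\<forall>j\<in>T. v j - \<kappa> j \<in> max_ideal)))"

text \<open>\<open>\<pi>\<close> is a linear projection of \<open>R\<^sup>S\<close> with kernel the image of \<open>B\<close>, which is
  therefore a direct summand.\<close>
definition complement_projection ::
    "nat set \<Rightarrow> nat set \<Rightarrow> (nat \<Rightarrow> nat \<Rightarrow> 'a::comm_ring_1) \<Rightarrow> ((nat \<Rightarrow> 'a) \<Rightarrow> nat \<Rightarrow> 'a) \<Rightarrow> bool" where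
  "complement_projection S T B \<pi> \<longleftrightarrow>
     (\<forall>x y. \<pi> (x + y) = \<pi> x + \<pi> y) \<and> (\<forall>r x. \<pi> (vscale r x) = vscale r (\<pi> x)) \<and>
     (\<forall>y. (\<forall>i. i \<notin> S \<longrightarrow> y i = 0) \<longrightarrow>
        (\<forall>i. i \<notin> S \<longrightarrow> \<pi> y i = 0) \<and> y - \<pi> y \<in> range (mat_on S T B)) \<and>
     (\<forall>v. \<pi> (mat_on S T B v) = 0)"

text \<open>Apply the lifting property to the unit vectors: the rows of \<open>B\<close> are then fixed by a matrix
  with entries in \<open>\<m>\<close>.\<close>
lemma kernel_lifts_max_ideal_entries_zero:
  fixes B :: "nat \<Rightarrow> nat \<Rightarrow> 'a::comm_ring_1"
  assumes mi: "is_ideal (max_ideal::'a set)" and T: "finite T"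
    and lifts: "kernel_lifts_mod_max S T B" and entries: "\<forall>i\<in>S. \<forall>j\<in>T. B i j \<in> max_ideal"
    and i: "i \<in> S"
  shows "\<forall>j\<in>T. B i j = 0"
proof -
  let ?e = "\<lambda>j k. if k = j then 1 else (0::'a)"
  have "\<forall>j\<in>T. \<exists>\<kappa>. (\<forall>i\<in>S. (\<Sum>k\<in>T. B i k * \<kappa> k) = 0) \<and> (\<forall>k\<in>T. ?e j k - \<kappa> k \<in> max_ideal)"
  proof
    fix j assume "j \<in> T"
    then have "\<forall>i\<in>S. (\<Sum>k\<in>T. B i k * ?e j k) \<in> max_ideal"
      using entries T by (simp add: sum_mult_delta)
    then show "\<exists>\<kappa>. (\<forall>i\<in>S. (\<Sum>k\<in>T. B i k * \<kappa> k) = 0) \<and> (\<forall>k\<in>T. ?e j k - \<kappa> k \<in> max_ideal)"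
      using lifts[unfolded kernel_lifts_mod_max_def, rule_format, of "?e j"] by blast
  qed
  then obtain K where K: "\<forall>j\<in>T. (\<forall>i\<in>S. (\<Sum>k\<in>T. B i k * K j k) = 0) \<and> (\<forall>k\<in>T. ?e j k - K j k \<in> max_ideal)"
    by metis
  have "\<forall>j\<in>T. B i j = (\<Sum>k\<in>T. (?e j k - K j k) * B i k)"
  proof
    fix j assume j: "j \<in> T"
    have "(\<Sum>k\<in>T. (?e j k - K j k) * B i k) = (\<Sum>k\<in>T. B i k * ?e j k) - (\<Sum>k\<in>T. B i k * K j k)"
      by (simp add: sum_subtractf[symmetric] algebra_simps)
    also have "\<dots> = B i j" using K j i T by (simp add: sum_mult_delta)
    finally show "B i j = (\<Sum>k\<in>T. (?e j k - K j k) * B i k)" by simp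
  qed
  moreover have "\<forall>j\<in>T. \<forall>k\<in>T. ?e j k - K j k \<in> max_ideal" using K by blast
  ultimately show ?thesis by (rule max_ideal_matrix_fixed_point_zero[OF mi T, rotated])
qed

text \<open>Eliminating the unit pivot \<open>B p q\<close> (with inverse \<open>g\<close>) leaves the Schur complement on the
  remaining rows and columns.\<close>
definition schur_complement :: "(nat \<Rightarrow> nat \<Rightarrow> 'a::comm_ring_1) \<Rightarrow> nat \<Rightarrow> nat \<Rightarrow> 'a \<Rightarrow> nat \<Rightarrow> nat \<Rightarrow> 'a" where
  "schur_complement B p q g = (\<lambda>i k. B i k - B i q * g * B p k)"

lemma schur_complement_pivot_row:
  "g * B p q = 1 \<Longrightarrow> schur_complement B p q g p k = 0"
  by (simp add: schur_complement_def mult.commute[of "B p q"])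

lemma sum_schur_complement:
  fixes B :: "nat \<Rightarrow> nat \<Rightarrow> 'a::comm_ring_1"
  assumes "finite T" and "q \<in> T"
  shows "(\<Sum>k\<in>T. B i k * v k) = B i q * (v q + g * (\<Sum>k\<in>T - {q}. B p k * v k))
           + (\<Sum>k\<in>T - {q}. schur_complement B p q g i k * v k)"
proof -
  have "(\<Sum>k\<in>T - {q}. schur_complement B p q g i k * v k)
      = (\<Sum>k\<in>T - {q}. B i k * v k) - B i q * g * (\<Sum>k\<in>T - {q}. B p k * v k)"
    by (simp add: schur_complement_def sum_subtractf sum_distrib_left algebra_simps)
  then show ?thesis using assms by (simp add: sum.remove algebra_simps)
qed

lemma kernel_lifts_schur_complement:
  fixes B :: "nat \<Rightarrow> nat \<Rightarrow> 'a::comm_ring_1"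
  assumes mi: "is_ideal (max_ideal::'a set)" and T: "finite T"
    and p: "p \<in> S" and q: "q \<in> T" and g: "g * B p q = 1"
    and lifts: "kernel_lifts_mod_max S T B"
  shows "kernel_lifts_mod_max (S - {p}) (T - {q}) (schur_complement B p q g)"
  unfolding kernel_lifts_mod_max_def
proof (intro allI impI)
  let ?B' = "schur_complement B p q g" and ?T' = "T - {q}"
  note pivot_row = schur_complement_pivot_row[of g B p q, OF g]
  note schur_sum = sum_schur_complement[OF T q, where B=B and g=g and p=p]
  fix v' assume v': "\<forall>i\<in>S - {p}. (\<Sum>k\<in>?T'. ?B' i k * v' k) \<in> max_ideal"
  define v where "v = v'(q := - g * (\<Sum>k\<in>?T'. B p k * v' k))"
  have on_T': "(\<Sum>k\<in>?T'. f k * v k) = (\<Sum>k\<in>?T'. f k * v' k)" for f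
    by (rule sum.cong) (auto simp: v_def)
  have Bv: "(\<Sum>k\<in>T. B i k * v k) = (\<Sum>k\<in>?T'. ?B' i k * v' k)" for i
    using schur_sum[where i=i and v=v] by (simp add: on_T') (simp add: v_def)
  have "\<forall>i\<in>S. (\<Sum>k\<in>T. B i k * v k) \<in> max_ideal"
    using v' ideal_zero[OF mi] by (auto simp: Bv pivot_row)
  then obtain \<kappa> where \<kappa>: "\<forall>i\<in>S. (\<Sum>k\<in>T. B i k * \<kappa> k) = 0" "\<forall>k\<in>T. v k - \<kappa> k \<in> max_ideal"
    using lifts unfolding kernel_lifts_mod_max_def by blast
  have "B p q * (\<kappa> q + g * (\<Sum>k\<in>?T'. B p k * \<kappa> k)) = 0"
    using schur_sum[where i=p and v=\<kappa>] \<kappa>(1) p by (simp add: pivot_row)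
  then have "g * (B p q * (\<kappa> q + g * (\<Sum>k\<in>?T'. B p k * \<kappa> k))) = 0" by simp
  then have pivot: "\<kappa> q + g * (\<Sum>k\<in>?T'. B p k * \<kappa> k) = 0"
    by (simp add: mult.assoc[symmetric] g)
  show "\<exists>\<kappa>. (\<forall>i\<in>S - {p}. (\<Sum>k\<in>?T'. ?B' i k * \<kappa> k) = 0) \<and> (\<forall>k\<in>?T'. v' k - \<kappa> k \<in> max_ideal)"
  proof (intro exI conjI ballI)
    fix i assume "i \<in> S - {p}"
    then show "(\<Sum>k\<in>?T'. ?B' i k * \<kappa> k) = 0"
      using schur_sum[where i=i and v=\<kappa>] pivot \<kappa>(1) by simp
  next
    fix k assume "k \<in> ?T'"
    then show "v' k - \<kappa> k \<in> max_ideal" using \<kappa>(2) by (auto simp: v_def)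
  qed
qed

definition clear_pivot ::
    "nat set \<Rightarrow> (nat \<Rightarrow> nat \<Rightarrow> 'a::comm_ring_1) \<Rightarrow> nat \<Rightarrow> nat \<Rightarrow> 'a \<Rightarrow> (nat \<Rightarrow> 'a) \<Rightarrow> nat \<Rightarrow> 'a" where
  "clear_pivot S B p q g y = (\<lambda>i. y i - (if i \<in> S then B i q else 0) * (g * y p))"

lemma clear_pivot_mat_on:
  fixes B :: "nat \<Rightarrow> nat \<Rightarrow> 'a::comm_ring_1"
  assumes T: "finite T" and p: "p \<in> S" and q: "q \<in> T" and g: "g * B p q = 1"
  shows "clear_pivot S B p q g (mat_on S T B v) = mat_on (S - {p}) (T - {q}) (schur_complement B p q g) v"
proof
  fix i
  note pivot_row = schur_complement_pivot_row[of g B p q, OF g]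
  note schur_sum = sum_schur_complement[OF T q, where B=B and g=g and p=p and v=v]
  have "mat_on S T B v p = B p q * (v q + g * (\<Sum>k\<in>T - {q}. B p k * v k))"
    using schur_sum[where i=p] p by (simp add: mat_on_def pivot_row)
  then have "g * mat_on S T B v p = v q + g * (\<Sum>k\<in>T - {q}. B p k * v k)"
    by (simp add: mult.assoc[symmetric] g)
  then show "clear_pivot S B p q g (mat_on S T B v) i = mat_on (S - {p}) (T - {q}) (schur_complement B p q g) v i"
    using schur_sum[where i=i] by (auto simp: clear_pivot_def mat_on_def pivot_row)
qed

lemma complement_projection_schur_complement:
  fixes B :: "nat \<Rightarrow> nat \<Rightarrow> 'a::comm_ring_1"
  assumes T: "finite T" and p: "p \<in> S" and q: "q \<in> T" and g: "g * B p q = 1"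
    and proj: "complement_projection (S - {p}) (T - {q}) (schur_complement B p q g) \<pi>'"
  shows "complement_projection S T B (\<lambda>y. \<pi>' (clear_pivot S B p q g y))"
proof -
  let ?S' = "S - {p}" and ?T' = "T - {q}" and ?B' = "schur_complement B p q g"
    and ?clear = "clear_pivot S B p q g"
  have pr_add: "\<And>x y. \<pi>' (x + y) = \<pi>' x + \<pi>' y"
    and pr_scale: "\<And>r x. \<pi>' (vscale r x) = vscale r (\<pi>' x)"
    and pr_complement: "\<And>y. \<forall>i. i \<notin> ?S' \<longrightarrow> y i = 0 \<Longrightarrow>
          (\<forall>i. i \<notin> ?S' \<longrightarrow> \<pi>' y i = 0) \<and> y - \<pi>' y \<in> range (mat_on ?S' ?T' ?B')"
    and pr_kills: "\<And>v. \<pi>' (mat_on ?S' ?T' ?B' v) = 0"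
    using proj unfolding complement_projection_def by blast+
  have clear_add: "?clear (x + y) = ?clear x + ?clear y" for x y
    by (simp add: clear_pivot_def fun_eq_iff algebra_simps)
  have clear_scale: "?clear (vscale r x) = vscale r (?clear x)" for r x
    by (simp add: clear_pivot_def vscale_def fun_eq_iff algebra_simps)
  have complement: "(\<forall>i. i \<notin> S \<longrightarrow> \<pi>' (?clear y) i = 0) \<and> y - \<pi>' (?clear y) \<in> range (mat_on S T B)"
    if y: "\<forall>i. i \<notin> S \<longrightarrow> y i = 0" for y
  proof -
    have "?clear y i = 0" if "i \<notin> ?S'" for i
    proof -
      from that consider "i = p" | "i \<notin> S" by blast
      then show ?thesis
      proof cases
        case 1
        have "B p q * g = 1" using g by (simp add: mult.commute)
        with 1 p show ?thesis by (simp add: clear_pivot_def mult.assoc[symmetric])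
      next
        case 2 then show ?thesis using y by (simp add: clear_pivot_def)
      qed
    qed
    then have "(\<forall>i. i \<notin> ?S' \<longrightarrow> \<pi>' (?clear y) i = 0) \<and> ?clear y - \<pi>' (?clear y) \<in> range (mat_on ?S' ?T' ?B')"
      by (intro pr_complement) blast
    then obtain w where w: "?clear y - \<pi>' (?clear y) = mat_on ?S' ?T' ?B' w"
      and supp: "\<forall>i. i \<notin> ?S' \<longrightarrow> \<pi>' (?clear y) i = 0" by blast
    define v where "v = w(q := g * y p - g * (\<Sum>k\<in>?T'. B p k * w k))"
    have on_T': "(\<Sum>k\<in>?T'. f k * v k) = (\<Sum>k\<in>?T'. f k * w k)" for f
      by (rule sum.cong) (auto simp: v_def)
    have pivot: "v q + g * (\<Sum>k\<in>?T'. B p k * w k) = g * y p"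
      by (simp add: v_def)
    have "y - \<pi>' (?clear y) = mat_on S T B v"
    proof
      fix i
      have "y i - \<pi>' (?clear y) i = (if i \<in> S then B i q else 0) * (g * y p) + mat_on ?S' ?T' ?B' w i"
        using fun_cong[OF w, of i] by (simp add: clear_pivot_def algebra_simps)
      moreover have "(\<Sum>k\<in>T. B i k * v k) = B i q * (g * y p) + (\<Sum>k\<in>?T'. ?B' i k * w k)"
        using sum_schur_complement[OF T q, where B=B and i=i and v=v and g=g and p=p]
        by (simp only: pivot on_T')
      ultimately show "(y - \<pi>' (?clear y)) i = mat_on S T B v i"
        by (simp add: mat_on_def schur_complement_pivot_row[of g B p q, OF g])
    qed
    then show ?thesis using supp by auto
  qed
  show ?thesis unfolding complement_projection_def
    using complement pr_kills clear_pivot_mat_on[where B=B, OF T p q g]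
    by (simp add: clear_add clear_scale pr_add pr_scale)
qed

lemma complement_projection_exists:
  fixes B :: "nat \<Rightarrow> nat \<Rightarrow> 'a::comm_ring_1"
  assumes mi: "is_ideal (max_ideal::'a set)" and "finite T" and "kernel_lifts_mod_max S T B"
  shows "\<exists>\<pi>. complement_projection S T B \<pi>"
  using assms(2,3)
proof (induction "card T" arbitrary: S T B rule: less_induct)
  case less
  show ?case
  proof (cases "\<forall>i\<in>S. \<forall>j\<in>T. B i j \<in> max_ideal")
    case True
    then have "mat_on S T B v = 0" for v
      using kernel_lifts_max_ideal_entries_zero[OF mi less.prems] by (auto simp: mat_on_def fun_eq_iff)
    then show ?thesis by (auto simp: complement_projection_def intro!: exI[of _ "\<lambda>y. y"])
  next
    case False
    then obtain p q where p: "p \<in> S" and q: "q \<in> T" and "B p q \<notin> max_ideal" by blast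
    then obtain g where g: "g * B p q = 1" using unit_of_not_max_ideal by blast
    have "card (T - {q}) < card T" using q less.prems(1) by (meson card_Diff1_less)
    then obtain \<pi>' where "complement_projection (S - {p}) (T - {q}) (schur_complement B p q g) \<pi>'"
      using less.hyps less.prems kernel_lifts_schur_complement[where B=B, OF mi less.prems(1) p q g] by blast
    then show ?thesis using complement_projection_schur_complement[where B=B, OF less.prems(1) p q g] by blast
  qed
qed

section \<open>Relations modulo \<open>\<m>N\<close>\<close>

text \<open>Induction on the number of generators \<open>x j\<close>: a column of \<open>A\<close> inside \<open>\<m>\<close> only contributes
  elements of \<open>\<m>N \<subseteq> P\<close> and is dropped; otherwise a unit entry is used as a pivot to clear its
  column. With no generators left, the coefficients of \<open>u \<notin> P\<close> must be non-units.\<close>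
lemma max_ideal_combination_of_relation:
  fixes sc :: "'a::comm_ring_1 \<Rightarrow> 'b::ab_group_add \<Rightarrow> 'b"
    and A :: "nat \<Rightarrow> nat \<Rightarrow> 'a" and v :: "nat \<Rightarrow> 'a" and x :: "nat \<Rightarrow> 'b"
  assumes "module sc" and P: "module.subspace sc P"
    and u: "u \<notin> P" and mN: "\<forall>r\<in>max_ideal. \<forall>y\<in>N. sc r y \<in> P"
    and "\<forall>j<m. x j \<in> N" and "\<forall>i<n. sc (v i) u - (\<Sum>j<m. sc (A i j) (x j)) \<in> P"
  shows "\<exists>c. \<forall>i<n. v i - (\<Sum>j<m. A i j * c j) \<in> max_ideal"
  using assms(5,6)
proof (induction m arbitrary: A v x)
  interpret X: module sc by fact
  case 0
  have "v i \<in> max_ideal" if i: "i < n" for i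
  proof (rule ccontr)
    assume "v i \<notin> max_ideal"
    then obtain g where g: "g * v i = 1" using unit_of_not_max_ideal by blast
    have "sc (v i) u \<in> P" using 0 i by simp
    then have "sc g (sc (v i) u) \<in> P" by (rule X.subspace_scale[OF P])
    with g u show False by simp
  qed
  then show ?case by simp
next
  interpret X: module sc by fact
  case (Suc m)
  have x: "\<forall>j<m. x j \<in> N" using Suc.prems(1) by simp
  show ?case
  proof (cases "\<forall>i<n. A i m \<in> max_ideal")
    case True
    have "sc (v i) u - (\<Sum>j<m. sc (A i j) (x j)) \<in> P" if i: "i < n" for i
    proof -
      have "sc (v i) u - (\<Sum>j<Suc m. sc (A i j) (x j)) + sc (A i m) (x m) \<in> P"
        using Suc.prems mN True i by (intro X.subspace_add[OF P]) auto
      then show ?thesis by simp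
    qed
    then obtain c where c: "\<forall>i<n. v i - (\<Sum>j<m. A i j * c j) \<in> max_ideal"
      using Suc.IH[OF x] by blast
    have "(\<Sum>j<m. A i j * (c(m := 0)) j) = (\<Sum>j<m. A i j * c j)" for i by (rule sum.cong) auto
    with c show ?thesis by (intro exI[of _ "c(m := 0)"]) simp
  next
    case False
    then obtain p where p: "p < n" and "A p m \<notin> max_ideal" by blast
    then obtain g where g: "g * A p m = 1" using unit_of_not_max_ideal by blast
    define v' where "v' i = v i - A i m * g * v p" for i
    define A' where "A' i j = A i j - A i m * g * A p j" for i j
    define E where "E i = sc (v i) u - (\<Sum>j<Suc m. sc (A i j) (x j))" for i
    have E': "sc (v' i) u - (\<Sum>j<m. sc (A' i j) (x j)) = E i - sc (A i m * g) (E p)" for i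
    proof -
      have "A i m * g * A p m = A i m" using g by (simp add: mult.assoc)
      then show ?thesis
        by (simp add: E_def v'_def A'_def X.scale_left_diff_distrib X.scale_right_diff_distrib
            sum_subtractf X.scale_sum_right algebra_simps)
    qed
    have "\<forall>i<n. sc (v' i) u - (\<Sum>j<m. sc (A' i j) (x j)) \<in> P"
      using Suc.prems(2) p unfolding E' E_def
      by (blast intro: X.subspace_diff[OF P] X.subspace_scale[OF P])
    then obtain c' where c': "\<forall>i<n. v' i - (\<Sum>j<m. A' i j * c' j) \<in> max_ideal"
      using Suc.IH[OF x] by blast
    define c where "c = c'(m := g * (v p - (\<Sum>j<m. A p j * c' j)))"
    have "(\<Sum>j<m. A i j * c j) = (\<Sum>j<m. A i j * c' j)" for i by (rule sum.cong) (auto simp: c_def)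
    then have "v i - (\<Sum>j<Suc m. A i j * c j) = v' i - (\<Sum>j<m. A' i j * c' j)" for i
      by (simp add: c_def v'_def A'_def sum_subtractf sum_distrib_left algebra_simps)
    with c' show ?thesis by (intro exI[of _ c]) simp
  qed
qed

lemma module_vscale: "module (vscale :: 'a::comm_ring_1 \<Rightarrow> (nat \<Rightarrow> 'a) \<Rightarrow> (nat \<Rightarrow> 'a))"
  by unfold_locales (simp_all add: vscale_def fun_eq_iff algebra_simps)

lemma subspace_vscale_iff:
  "module.subspace (vscale :: 'a::comm_ring_1 \<Rightarrow> (nat \<Rightarrow> 'a) \<Rightarrow> (nat \<Rightarrow> 'a)) S \<longleftrightarrow>
     0 \<in> S \<and> (\<forall>x\<in>S. \<forall>y\<in>S. x + y \<in> S) \<and> (\<forall>c. \<forall>x\<in>S. vscale c x \<in> S)"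
  by (rule module.subspace_def[OF module_vscale])

lemma zero_in_vecs: "0 \<in> vecs n"
  by (simp add: vecs_def)

lemma vecs_add: "(x::nat \<Rightarrow> 'a::ab_group_add) \<in> vecs n \<Longrightarrow> y \<in> vecs n \<Longrightarrow> x + y \<in> vecs n"
  by (simp add: vecs_def)

lemma vecs_diff: "(x::nat \<Rightarrow> 'a::ab_group_add) \<in> vecs n \<Longrightarrow> y \<in> vecs n \<Longrightarrow> x - y \<in> vecs n"
  by (simp add: vecs_def)

lemma vecs_vscale: "(x::nat \<Rightarrow> 'a::comm_ring_1) \<in> vecs n \<Longrightarrow> vscale c x \<in> vecs n"
  by (simp add: vecs_def vscale_def)

lemma subspace_vecs: "module.subspace vscale (vecs n :: (nat \<Rightarrow> 'a::comm_ring_1) set)"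
  by (simp add: subspace_vscale_iff zero_in_vecs vecs_add vecs_vscale)

lemma mat_app_add:
  "mat_app (*) n D (x + y) = mat_app (*) n D x + (mat_app (*) n D y :: nat \<Rightarrow> 'a::comm_ring_1)"
  by (simp add: mat_app_def fun_eq_iff algebra_simps sum.distrib)

lemma mat_app_vscale:
  "mat_app (*) n D (vscale r x) = vscale r (mat_app (*) n D x :: nat \<Rightarrow> 'a::comm_ring_1)"
  by (simp add: mat_app_def vscale_def fun_eq_iff sum_distrib_left algebra_simps)

lemma mat_app_zero: "mat_app (*) n D 0 = (0 :: nat \<Rightarrow> 'a::comm_ring_1)"
  by (simp add: mat_app_def fun_eq_iff)

lemma lin_on_mat_app: "lin_on vscale vscale S (mat_app (*) n D :: (nat \<Rightarrow> 'a::comm_ring_1) \<Rightarrow> _)"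
  by (simp add: lin_on_def mat_app_add mat_app_vscale)

lemma mat_app_in_vecs:
  "\<forall>i j. m \<le> i \<longrightarrow> D i j = 0 \<Longrightarrow> mat_app (*) n D (x :: nat \<Rightarrow> 'a::comm_ring_1) \<in> vecs m"
  by (simp add: mat_app_def vecs_def)

lemma mat_app_unit_vector:
  "l < n \<Longrightarrow> mat_app (*) n D (\<lambda>j. if j = l then 1 else 0) = (\<lambda>i. D i l :: 'a::comm_ring_1)"
  by (simp add: mat_app_def fun_eq_iff sum_mult_delta)

lemma mat_app_mat_app_eq_0:
  fixes sc :: "'a::comm_ring_1 \<Rightarrow> 'b::ab_group_add \<Rightarrow> 'b"
  assumes "module sc" and "\<forall>i l. l < q \<longrightarrow> (\<Sum>j<p. D i j * E j l) = 0"
  shows "mat_app sc p D (mat_app sc q E w) = 0"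
proof
  interpret module sc by fact
  fix i
  have "mat_app sc p D (mat_app sc q E w) i = (\<Sum>l<q. \<Sum>j<p. sc (D i j * E j l) (w l))"
    by (simp add: mat_app_def scale_sum_right sum.swap[of _ "{..<p}"])
  also have "\<dots> = (\<Sum>l<q. sc (\<Sum>j<p. D i j * E j l) (w l))" by (simp add: scale_sum_left)
  also have "\<dots> = 0" using assms(2) by simp
  finally show "mat_app sc p D (mat_app sc q E w) i = 0 i" by simp
qed

lemma mat_on_eq_mat_app:
  fixes D :: "nat \<Rightarrow> nat \<Rightarrow> 'a::comm_ring_1"
  assumes "\<forall>i j. n \<le> i \<longrightarrow> D i j = 0"
  shows "mat_on {..<n} {..<m} D w = mat_app (*) m D (\<lambda>j. if j < m then w j else 0)"
  using assms by (auto simp: mat_on_def mat_app_def fun_eq_iff intro: sum.cong)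

lemma fg_projective_vecs: "fg_projective n (vecs n :: (nat \<Rightarrow> 'a::comm_ring_1) set)"
  unfolding fg_projective_def
  by (intro conjI subspace_vecs exI[of _ n] exI[of _ "\<lambda>x. x"]) (auto simp: lin_on_def)

lemma fg_projective_zero: "fg_projective n ({0} :: (nat \<Rightarrow> 'a::comm_ring_1) set)"
  unfolding fg_projective_def
  by (intro conjI exI[of _ 0] exI[of _ "\<lambda>x. 0"])
    (auto simp: lin_on_def subspace_vscale_iff zero_in_vecs vscale_def fun_eq_iff)

lemma fg_projective_retract_image:
  fixes \<pi> :: "(nat \<Rightarrow> 'a::comm_ring_1) \<Rightarrow> nat \<Rightarrow> 'a"
  assumes add: "\<And>x y. \<pi> (x + y) = \<pi> x + \<pi> y" and scale: "\<And>r x. \<pi> (vscale r x) = vscale r (\<pi> x)"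
    and into: "\<And>y. y \<in> vecs n \<Longrightarrow> \<pi> y \<in> vecs n" and idem: "\<And>y. y \<in> vecs n \<Longrightarrow> \<pi> (\<pi> y) = \<pi> y"
  shows "fg_projective n (\<pi> ` vecs n)"
proof -
  have "\<pi> 0 = 0" using add[of 0 0] by simp
  then have "0 \<in> \<pi> ` vecs n" using zero_in_vecs by (metis image_eqI)
  then have "module.subspace vscale (\<pi> ` vecs n)"
    unfolding subspace_vscale_iff
    by (auto simp: add[symmetric] scale[symmetric] intro!: imageI vecs_add vecs_vscale)
  moreover have "\<pi> ` vecs n \<subseteq> vecs n" using into by blast
  ultimately show ?thesis
    unfolding fg_projective_def using idem
    by (intro conjI exI[of _ n] exI[of _ "\<lambda>x. x"] exI[of _ \<pi>]) (auto simp: lin_on_def add scale)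
qed

section \<open>Truncating a free resolution\<close>

lemma free_res_rows_zero:
  "free_res scM b d eps \<Longrightarrow> b k \<le> i \<Longrightarrow> d (Suc k) i j = 0"
  unfolding free_res_def by auto

lemma free_res_mat_app_in_vecs:
  "free_res scM b d eps \<Longrightarrow> mat_app (*) n (d (Suc k)) x \<in> vecs (b k)"
  by (intro mat_app_in_vecs) (auto dest: free_res_rows_zero)

lemma free_res_exact:
  "free_res scM b d eps \<Longrightarrow> 1 \<le> k \<Longrightarrow> x \<in> vecs (b k) \<Longrightarrow>
     mat_app (*) (b k) (d k) x = 0 \<longleftrightarrow> x \<in> mat_app (*) (b (Suc k)) (d (Suc k)) ` vecs (b (Suc k))"
  unfolding free_res_def by blast

lemma free_res_comp_entries_zero:
  assumes F: "free_res scM b d eps" and k: "1 \<le> k" and l: "l < b (Suc k)"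
  shows "(\<Sum>j<b k. d k i j * d (Suc k) j l) = 0"
proof -
  let ?e = "\<lambda>j. if j = l then 1 else 0"
  have "?e \<in> vecs (b (Suc k))" using l by (simp add: vecs_def)
  then have "mat_app (*) (b k) (d k) (mat_app (*) (b (Suc k)) (d (Suc k)) ?e) = 0"
    using free_res_exact[OF F k free_res_mat_app_in_vecs[OF F]] by blast
  then have "mat_app (*) (b k) (d k) (\<lambda>i. d (Suc k) i l) = 0"
    by (simp only: mat_app_unit_vector[OF l])
  then show ?thesis unfolding mat_app_def by (metis zero_fun_def)
qed

lemma free_res_comp_zero:
  fixes sc :: "'a::comm_ring_1 \<Rightarrow> 'b::ab_group_add \<Rightarrow> 'b"
  assumes "module sc" and "free_res scM b d eps" and "1 \<le> k"
  shows "mat_app sc (b k) (d k) (mat_app sc (b (Suc k)) (d (Suc k)) w) = 0"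
  using assms by (intro mat_app_mat_app_eq_0) (auto intro: free_res_comp_entries_zero)

lemma complement_projection_vecs:
  fixes \<pi> :: "(nat \<Rightarrow> 'a::comm_ring_1) \<Rightarrow> nat \<Rightarrow> 'a"
  assumes F: "free_res scM b d eps"
    and proj: "complement_projection {..<b s} {..<b (Suc s)} (d (Suc s)) \<pi>"
  defines "D \<equiv> mat_app (*) (b (Suc s)) (d (Suc s))"
  shows "\<And>y. y \<in> vecs (b s) \<Longrightarrow> \<pi> y \<in> vecs (b s)"
    and "\<And>y. y \<in> vecs (b s) \<Longrightarrow> y - \<pi> y \<in> D ` vecs (b (Suc s))"
    and "\<And>w. w \<in> vecs (b (Suc s)) \<Longrightarrow> \<pi> (D w) = 0"
    and "\<And>y. y \<in> vecs (b s) \<Longrightarrow> \<pi> (\<pi> y) = \<pi> y"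
proof -
  let ?trunc = "\<lambda>w j. if j < b (Suc s) then w j else 0"
  have mat_on_D: "mat_on {..<b s} {..<b (Suc s)} (d (Suc s)) w = D (?trunc w)" for w
    unfolding D_def using free_res_rows_zero[OF F] by (intro mat_on_eq_mat_app) blast
  have supp: "y \<in> vecs (b s) \<longleftrightarrow> (\<forall>i. i \<notin> {..<b s} \<longrightarrow> y i = 0)" for y :: "nat \<Rightarrow> 'a"
    by (auto simp: vecs_def)
  have trunc: "?trunc w \<in> vecs (b (Suc s))" for w by (simp add: vecs_def)
  have complement: "(\<forall>i. i \<notin> {..<b s} \<longrightarrow> \<pi> y i = 0) \<and> y - \<pi> y \<in> range (\<lambda>w. D (?trunc w))"
    if "y \<in> vecs (b s)" for y
    using proj that unfolding complement_projection_def supp mat_on_D by blast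
  show "\<pi> y \<in> vecs (b s)" if "y \<in> vecs (b s)" for y
    using complement[OF that] supp by blast
  show "y - \<pi> y \<in> D ` vecs (b (Suc s))" if "y \<in> vecs (b s)" for y
    using complement[OF that] trunc by blast
  show kills: "\<pi> (D w) = 0" if "w \<in> vecs (b (Suc s))" for w
  proof -
    have "?trunc w = w" using that by (auto simp: vecs_def)
    then show ?thesis using proj mat_on_D[of w] unfolding complement_projection_def by metis
  qed
  show "\<pi> (\<pi> y) = \<pi> y" if y: "y \<in> vecs (b s)" for y
  proof -
    obtain w where "w \<in> vecs (b (Suc s))" and "y - \<pi> y = D w" using complement[OF y] trunc by blast
    then have "\<pi> (y - \<pi> y) = 0" using kills by simp
    moreover have "\<pi> (y - \<pi> y) + \<pi> (\<pi> y) = \<pi> y"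
      using proj unfolding complement_projection_def by (metis diff_add_cancel)
    ultimately show ?thesis by simp
  qed
qed

lemma complement_image_kernel:
  fixes \<pi> :: "(nat \<Rightarrow> 'a::comm_ring_1) \<Rightarrow> nat \<Rightarrow> 'a" and \<phi> :: "(nat \<Rightarrow> 'a) \<Rightarrow> 'c::ab_group_add"
  assumes \<phi>_add: "\<forall>x\<in>vecs n. \<forall>y\<in>vecs n. \<phi> (x + y) = \<phi> x + \<phi> y"
    and exact: "\<forall>x\<in>vecs n. \<phi> x = 0 \<longleftrightarrow> x \<in> D ` W"
    and \<pi>_add: "\<And>x y. \<pi> (x + y) = \<pi> x + \<pi> y"
    and into: "\<And>y. y \<in> vecs n \<Longrightarrow> \<pi> y \<in> vecs n"
    and complement: "\<And>y. y \<in> vecs n \<Longrightarrow> y - \<pi> y \<in> D ` W"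
    and kills: "\<And>w. w \<in> W \<Longrightarrow> \<pi> (D w) = 0"
  shows "\<phi> ` \<pi> ` vecs n = \<phi> ` vecs n"
    and "\<And>x. x \<in> \<pi> ` vecs n \<Longrightarrow> \<phi> x = 0 \<longleftrightarrow> x = 0"
proof -
  have \<phi>_\<pi>: "\<phi> y = \<phi> (\<pi> y)" if y: "y \<in> vecs n" for y
  proof -
    have "\<phi> y = \<phi> (\<pi> y) + \<phi> (y - \<pi> y)"
      using \<phi>_add into[OF y] vecs_diff[OF y into[OF y]] by (metis add.commute diff_add_cancel)
    then show ?thesis using exact complement[OF y] vecs_diff[OF y into[OF y]] by simp
  qed
  then show "\<phi> ` \<pi> ` vecs n = \<phi> ` vecs n"
    using into by (auto simp: image_iff) (metis \<phi>_\<pi>)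
  have \<pi>_diff: "\<pi> (x - y) = \<pi> x - \<pi> y" for x y
    using \<pi>_add[of "x - y" y] by simp
  have \<pi>_kills_complement: "\<pi> (y - \<pi> y) = 0" if y: "y \<in> vecs n" for y
  proof -
    obtain w where "w \<in> W" and "y - \<pi> y = D w" using complement[OF y] by blast
    then show ?thesis using kills by simp
  qed
  have "\<phi> 0 = 0" using \<phi>_add zero_in_vecs by (metis add_cancel_right_right add_0)
  moreover have "x = 0" if "x \<in> \<pi> ` vecs n" and "\<phi> x = 0" for x
  proof -
    obtain y where y: "y \<in> vecs n" and x: "x = \<pi> y" using \<open>x \<in> \<pi> ` vecs n\<close> by blast
    then have "x \<in> D ` W" using exact into \<open>\<phi> x = 0\<close> by blast
    then have "\<pi> x = 0" using kills by blast
    moreover have "\<pi> x = x" using \<pi>_kills_complement[OF y] by (simp add: x \<pi>_diff)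
    ultimately show "x = 0" by simp
  qed
  ultimately show "\<phi> x = 0 \<longleftrightarrow> x = 0" if "x \<in> \<pi> ` vecs n" for x using that by blast
qed

lemma lin_on_subset: "lin_on sc1 sc2 B f \<Longrightarrow> A \<subseteq> B \<Longrightarrow> lin_on sc1 sc2 A f"
  unfolding lin_on_def by blast

definition truncated_res :: "(nat \<Rightarrow> nat) \<Rightarrow> nat \<Rightarrow> (nat \<Rightarrow> 'a::zero) set \<Rightarrow> nat \<Rightarrow> (nat \<Rightarrow> 'a) set" where
  "truncated_res b s C k = (if k < s then vecs (b k) else if k = s then C else {0})"

lemma truncated_res_maps:
  assumes F: "free_res scM b d eps" and "0 \<in> C" and k: "1 \<le> k" and x: "x \<in> truncated_res b s C k"
  shows "mat_app (*) (b k) (d k) x \<in> truncated_res b s C (k - 1)"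
proof (cases "k \<le> s")
  case True
  then have "k - 1 < s" and "k = Suc (k - 1)" using k by auto
  then show ?thesis using free_res_mat_app_in_vecs[OF F, of _ "k - 1"] by (metis truncated_res_def)
next
  case False
  then show ?thesis using x \<open>0 \<in> C\<close> by (simp add: truncated_res_def mat_app_zero zero_in_vecs)
qed

lemma truncated_res_exact:
  fixes C :: "(nat \<Rightarrow> 'a::comm_ring_1) set"
  assumes F: "free_res scM b d eps" and k: "1 \<le> k" and x: "x \<in> truncated_res b s C k"
    and image: "1 \<le> s \<Longrightarrow> mat_app (*) (b s) (d s) ` C = mat_app (*) (b s) (d s) ` vecs (b s)"
    and kernel: "\<And>y. 1 \<le> s \<Longrightarrow> y \<in> C \<Longrightarrow> mat_app (*) (b s) (d s) y = 0 \<longleftrightarrow> y = 0"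
  shows "mat_app (*) (b k) (d k) x = 0 \<longleftrightarrow>
    x \<in> mat_app (*) (b (Suc k)) (d (Suc k)) ` truncated_res b s C (Suc k)"
proof -
  consider "Suc k < s" | "Suc k = s" | "k = s" | "s < k" by arith
  then show ?thesis
  proof cases
    case 1 then show ?thesis using x free_res_exact[OF F k] by (simp add: truncated_res_def)
  next
    case 2 then show ?thesis using x free_res_exact[OF F k] image by (auto simp: truncated_res_def)
  next
    case 3 then show ?thesis using x kernel k by (auto simp: truncated_res_def mat_app_zero)
  next
    case 4 then show ?thesis using x by (simp add: truncated_res_def mat_app_zero)
  qed
qed

lemma truncated_res_exact_0:
  fixes C :: "(nat \<Rightarrow> 'a::comm_ring_1) set"
  assumes F: "free_res scM b d eps" and x: "x \<in> truncated_res b s C 0"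
    and image: "s = 1 \<Longrightarrow> mat_app (*) (b 1) (d 1) ` C = mat_app (*) (b 1) (d 1) ` vecs (b 1)"
    and kernel: "\<And>y. s = 0 \<Longrightarrow> y \<in> C \<Longrightarrow> eps y = 0 \<longleftrightarrow> y = 0"
  shows "eps x = 0 \<longleftrightarrow> x \<in> mat_app (*) (b 1) (d 1) ` truncated_res b s C 1"
proof -
  have exact: "\<forall>x\<in>vecs (b 0). eps x = 0 \<longleftrightarrow> x \<in> mat_app (*) (b 1) (d 1) ` vecs (b 1)"
    using F unfolding free_res_def by blast
  consider "s = 0" | "s = 1" | "1 < s" by arith
  then show ?thesis
  proof cases
    case 1 then show ?thesis using x kernel by (simp add: truncated_res_def mat_app_zero)
  next
    case 2 then show ?thesis using x exact image by (simp add: truncated_res_def)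
  next
    case 3 then show ?thesis using x exact by (simp add: truncated_res_def)
  qed
qed

text \<open>Truncate the resolution at degree \<open>s\<close> and replace \<open>F\<^sub>s\<close> by the complement \<open>C\<close> of the image
  of \<open>d\<^sub>s\<^sub>+\<^sub>1\<close>.\<close>
lemma pd_less_of_complement_projection:
  fixes \<pi> :: "(nat \<Rightarrow> 'a::comm_ring_1) \<Rightarrow> nat \<Rightarrow> 'a" and scM :: "'a \<Rightarrow> 'c::ab_group_add \<Rightarrow> 'c"
  assumes F: "free_res scM b d eps"
    and proj: "complement_projection {..<b s} {..<b (Suc s)} (d (Suc s)) \<pi>"
  shows "pd_less scM (Suc s)"
proof -
  define f where "f k = mat_app (*) (b k) (d k)" for k
  define C where "C = \<pi> ` vecs (b s)"
  let ?P = "truncated_res b s C"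
  have \<pi>_add: "\<pi> (x + y) = \<pi> x + \<pi> y" and \<pi>_scale: "\<pi> (vscale r x) = vscale r (\<pi> x)" for x y r
    using proj unfolding complement_projection_def by blast+
  note \<pi>_vecs = complement_projection_vecs[OF F proj, folded f_def]
  have eps_lin: "lin_on vscale scM (vecs (b 0)) eps" and eps_onto: "eps ` vecs (b 0) = UNIV"
    and eps_exact: "\<forall>x\<in>vecs (b 0). eps x = 0 \<longleftrightarrow> x \<in> f 1 ` vecs (b 1)"
    using F unfolding free_res_def f_def by blast+
  have on_C: "\<phi> ` C = \<phi> ` vecs (b s) \<and> (\<forall>x\<in>C. \<phi> x = 0 \<longleftrightarrow> x = 0)"
    if "\<forall>x\<in>vecs (b s). \<forall>y\<in>vecs (b s). \<phi> (x + y) = \<phi> x + \<phi> y"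
      and "\<forall>x\<in>vecs (b s). \<phi> x = 0 \<longleftrightarrow> x \<in> f (Suc s) ` vecs (b (Suc s))"
    for \<phi> :: "(nat \<Rightarrow> 'a) \<Rightarrow> 'd::ab_group_add"
    using complement_image_kernel[OF that \<pi>_add \<pi>_vecs(1-3)] unfolding C_def by blast
  have eps_C: "eps ` C = UNIV \<and> (\<forall>x\<in>C. eps x = 0 \<longleftrightarrow> x = 0)" if "s = 0"
    using on_C[of eps] eps_lin eps_onto eps_exact that unfolding lin_on_def by simp
  have f_C: "f s ` C = f s ` vecs (b s) \<and> (\<forall>x\<in>C. f s x = 0 \<longleftrightarrow> x = 0)" if "1 \<le> s"
    using on_C[of "f s"] free_res_exact[OF F that] by (simp add: f_def mat_app_add)
  have C_vecs: "C \<subseteq> vecs (b s)" using \<pi>_vecs(1) by (auto simp: C_def)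
  have "\<pi> 0 = 0" using \<pi>_add[of 0 0] by simp
  then have zero_C: "0 \<in> C" using zero_in_vecs by (force simp: C_def)
  have P_projective: "\<forall>k. fg_projective (b k) (?P k)"
    using fg_projective_retract_image[OF \<pi>_add \<pi>_scale \<pi>_vecs(1,4)]
      fg_projective_vecs fg_projective_zero by (auto simp: truncated_res_def C_def)
  have P_top: "\<forall>k\<ge>Suc s. ?P k = {0}" by (simp add: truncated_res_def)
  have P_maps: "\<forall>k\<ge>1. (\<forall>x\<in>?P k. f k x \<in> ?P (k - 1)) \<and> lin_on vscale vscale (?P k) (f k)"
    using truncated_res_maps[OF F zero_C] by (simp add: f_def lin_on_mat_app)
  have P_eps_lin: "lin_on vscale scM (?P 0) eps"
    using C_vecs zero_in_vecs by (intro lin_on_subset[OF eps_lin]) (auto simp: truncated_res_def)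
  have P_eps_onto: "eps ` ?P 0 = UNIV" using eps_C eps_onto by (simp add: truncated_res_def)
  have P_exact_0: "\<forall>x\<in>?P 0. eps x = 0 \<longleftrightarrow> x \<in> f 1 ` ?P 1"
  proof
    fix x assume "x \<in> ?P 0"
    then show "eps x = 0 \<longleftrightarrow> x \<in> f 1 ` ?P 1" unfolding f_def
      by (rule truncated_res_exact_0[OF F]) (use f_C eps_C in \<open>auto simp: f_def\<close>)
  qed
  have P_exact: "\<forall>k\<ge>1. \<forall>x\<in>?P k. f k x = 0 \<longleftrightarrow> x \<in> f (Suc k) ` ?P (Suc k)"
  proof (intro allI impI ballI)
    fix k x assume "1 \<le> k" and "x \<in> ?P k"
    then show "f k x = 0 \<longleftrightarrow> x \<in> f (Suc k) ` ?P (Suc k)" unfolding f_def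
      by (rule truncated_res_exact[OF F]) (use f_C in \<open>auto simp: f_def\<close>)
  qed
  show ?thesis unfolding pd_less_def
    using P_projective P_top P_maps P_eps_lin P_eps_onto P_exact_0 P_exact
    by (intro exI[of _ b] exI[of _ ?P] exI[of _ f] exI[of _ eps] conjI)
qed

section \<open>Burch submodules and vanishing of Tor\<close>

lemma scale_in_prod_sub:
  assumes "module sc" and "r \<in> I" and "y \<in> S"
  shows "sc r y \<in> prod_sub sc I S"
  using assms unfolding prod_sub_def by (blast intro: module.span_base)

lemma subspace_prod_sub: "module sc \<Longrightarrow> module.subspace sc (prod_sub sc I S)"
  unfolding prod_sub_def by (rule module.subspace_span)

lemma burch_submoduleE:
  fixes sc :: "'a::comm_ring_1 \<Rightarrow> 'b::ab_group_add \<Rightarrow> 'b"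
  assumes "module sc" and N: "module.subspace sc N" and "burch_submodule sc N"
  obtains a x where "a \<in> max_ideal" and "x \<in> colon_sub sc N max_ideal"
    and "sc a x \<notin> prod_sub sc max_ideal N"
proof -
  interpret X: module sc by fact
  have "N \<subseteq> colon_sub sc N max_ideal"
    using X.subspace_scale[OF N] by (auto simp: colon_sub_def)
  then have "prod_sub sc max_ideal N \<subseteq> prod_sub sc max_ideal (colon_sub sc N max_ideal)"
    unfolding prod_sub_def by (intro X.span_mono) blast
  then have "\<not> prod_sub sc max_ideal (colon_sub sc N max_ideal) \<subseteq> prod_sub sc max_ideal N"
    using \<open>burch_submodule sc N\<close> unfolding burch_submodule_def by blast
  moreover have "prod_sub sc max_ideal (colon_sub sc N max_ideal) \<subseteq> prod_sub sc max_ideal N"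
    if "\<forall>a\<in>max_ideal. \<forall>x\<in>colon_sub sc N max_ideal. sc a x \<in> prod_sub sc max_ideal N"
    using that subspace_prod_sub[OF \<open>module sc\<close>] unfolding prod_sub_def[of _ _ "colon_sub _ _ _"]
    by (intro X.span_minimal) blast+
  ultimately show ?thesis using that by blast
qed

text \<open>Multiply \<open>v\<close> by \<open>x \<in> (N :\<^sub>X \<m>)\<close> to get a cycle of \<open>F \<otimes> X/N\<close>; the vanishing of
  \<open>Tor\<^sub>s\<^sub>+\<^sub>1\<close> writes it as a boundary \<open>d z\<close> modulo \<open>N\<close>. Then \<open>a z\<close> is again a cycle, because
  \<open>a x \<in> N\<close>, and the vanishing of \<open>Tor\<^sub>s\<^sub>+\<^sub>2\<close> writes it as \<open>d z'' + w\<close>; applying \<open>d\<close> gives the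
  relation, since \<open>d d = 0\<close>.\<close>
lemma tor_vanishing_relation:
  fixes sc :: "'a::comm_ring_1 \<Rightarrow> 'b::ab_group_add \<Rightarrow> 'b"
  assumes "module sc" and N: "module.subspace sc N" and F: "free_res scM b d eps"
    and tor1: "tor_quot_vanishes sc b d N (Suc s)" and tor2: "tor_quot_vanishes sc b d N (Suc (Suc s))"
    and x: "x \<in> colon_sub sc N max_ideal" and a: "a \<in> max_ideal"
    and v: "v \<in> vecs (b (Suc s))"
    and v_cycle: "\<forall>i<b s. (\<Sum>j<b (Suc s). d (Suc s) i j * v j) \<in> max_ideal"
  shows "\<exists>w. (\<forall>j. w j \<in> N) \<and> (\<forall>i<b (Suc s). sc (v i) (sc a x)
            - (\<Sum>j<b (Suc (Suc s)). sc (d (Suc (Suc s)) i j) (w j)) \<in> prod_sub sc max_ideal N)"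
proof -
  interpret X: module sc by fact
  let ?d1 = "mat_app sc (b (Suc s)) (d (Suc s))" and ?d2 = "mat_app sc (b (Suc (Suc s))) (d (Suc (Suc s)))"
    and ?d3 = "mat_app sc (b (Suc (Suc (Suc s)))) (d (Suc (Suc (Suc s))))"
  have mx: "sc r x \<in> N" if "r \<in> max_ideal" for r using x that by (simp add: colon_sub_def)
  define y where "y j = sc (v j) x" for j
  have y: "y \<in> vecs (b (Suc s))" using v by (simp add: vecs_def y_def)
  have "?d1 y i \<in> N" for i
  proof (cases "i < b s")
    case True
    have "?d1 y i = sc (\<Sum>j<b (Suc s). d (Suc s) i j * v j) x"
      by (simp add: mat_app_def y_def X.scale_sum_left)
    then show ?thesis using v_cycle mx True by simp
  next
    case False
    then show ?thesis using free_res_rows_zero[OF F] X.subspace_0[OF N]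
      by (simp add: mat_app_def y_def)
  qed
  then obtain z w where z: "z \<in> vecs (b (Suc (Suc s)))" and w: "\<forall>i. w i \<in> N" and yzw: "y = ?d2 z + w"
    using tor1 y unfolding tor_quot_vanishes_def by blast
  define az where "az j = sc a (z j)" for j
  have d2_az: "?d2 az i = sc (v i) (sc a x) - sc a (w i)" for i
  proof -
    have "?d2 az i = sc a (?d2 z i)"
      by (simp add: az_def mat_app_def X.scale_sum_right mult.commute)
    also have "?d2 z i = y i - w i" using fun_cong[OF yzw, of i] by simp
    finally show ?thesis by (simp add: y_def X.scale_right_diff_distrib mult.commute)
  qed
  have "?d2 az i \<in> N" for i
    unfolding d2_az using X.subspace_scale[OF N] mx[OF a] w by (blast intro: X.subspace_diff[OF N])
  moreover have "az \<in> vecs (b (Suc (Suc s)))" using z by (simp add: vecs_def az_def)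
  ultimately obtain z'' w' where w': "\<forall>i. w' i \<in> N" and az: "az = ?d3 z'' + w'"
    using tor2 unfolding tor_quot_vanishes_def by blast
  have "?d2 (?d3 z'') = 0" by (rule free_res_comp_zero[OF \<open>module sc\<close> F]) simp
  then have "?d2 az = ?d2 w'"
    by (simp add: az mat_app_def fun_eq_iff X.scale_right_distrib sum.distrib)
  then have "sc (v i) (sc a x) - (\<Sum>j<b (Suc (Suc s)). sc (d (Suc (Suc s)) i j) (w' j)) = sc a (w i)" for i
    using d2_az[of i] by (simp add: mat_app_def fun_eq_iff)
  then show ?thesis
    using w' scale_in_prod_sub[OF \<open>module sc\<close> a] w by (intro exI[of _ w']) simp
qed

text \<open>The coefficients \<open>c\<close> of the relation give the cycle \<open>\<kappa> = d c\<close> congruent to \<open>v\<close> modulo \<open>\<m>\<close>.\<close>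
lemma tor_vanishing_kernel_lifts:
  fixes sc :: "'a::comm_ring_1 \<Rightarrow> 'b::ab_group_add \<Rightarrow> 'b"
  assumes X: "module sc" and N: "module.subspace sc N" and "burch_submodule sc N"
    and F: "free_res scM b d eps"
    and tor1: "tor_quot_vanishes sc b d N (Suc s)" and tor2: "tor_quot_vanishes sc b d N (Suc (Suc s))"
  shows "kernel_lifts_mod_max {..<b s} {..<b (Suc s)} (d (Suc s))"
  unfolding kernel_lifts_mod_max_def
proof (intro allI impI)
  obtain a x where a: "a \<in> max_ideal" and x: "x \<in> colon_sub sc N max_ideal"
    and ax: "sc a x \<notin> prod_sub sc max_ideal N"
    using burch_submoduleE[OF X N \<open>burch_submodule sc N\<close>] by blast
  fix v assume v: "\<forall>i\<in>{..<b s}. (\<Sum>j\<in>{..<b (Suc s)}. d (Suc s) i j * v j) \<in> max_ideal"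
  define v0 where "v0 j = (if j < b (Suc s) then v j else 0)" for j
  have on_v0: "(\<Sum>j<b (Suc s). f j * v0 j) = (\<Sum>j<b (Suc s). f j * v j)" for f
    by (rule sum.cong) (auto simp: v0_def)
  have "v0 \<in> vecs (b (Suc s))" by (simp add: vecs_def v0_def)
  moreover have "\<forall>i<b s. (\<Sum>j<b (Suc s). d (Suc s) i j * v0 j) \<in> max_ideal"
    using v by (simp add: on_v0)
  ultimately obtain w where w: "\<forall>j. w j \<in> N" and rel: "\<forall>i<b (Suc s). sc (v0 i) (sc a x)
      - (\<Sum>j<b (Suc (Suc s)). sc (d (Suc (Suc s)) i j) (w j)) \<in> prod_sub sc max_ideal N"
    using tor_vanishing_relation[OF X N F tor1 tor2 x a] by blast
  have mN: "\<forall>r\<in>max_ideal. \<forall>y\<in>N. sc r y \<in> prod_sub sc max_ideal N"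
    using scale_in_prod_sub[OF X] by blast
  obtain c where c: "\<forall>i<b (Suc s). v0 i - (\<Sum>j<b (Suc (Suc s)). d (Suc (Suc s)) i j * c j) \<in> max_ideal"
    using max_ideal_combination_of_relation[OF X subspace_prod_sub[OF X] ax mN _ rel] w by blast
  define c0 where "c0 j = (if j < b (Suc (Suc s)) then c j else 0)" for j
  define \<kappa> where "\<kappa> = mat_app (*) (b (Suc (Suc s))) (d (Suc (Suc s))) c0"
  have "c0 \<in> vecs (b (Suc (Suc s)))" by (simp add: vecs_def c0_def)
  then have "\<kappa> \<in> mat_app (*) (b (Suc (Suc s))) (d (Suc (Suc s))) ` vecs (b (Suc (Suc s)))"
    unfolding \<kappa>_def by blast
  moreover have "\<kappa> \<in> vecs (b (Suc s))" unfolding \<kappa>_def by (rule free_res_mat_app_in_vecs[OF F])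
  ultimately have "mat_app (*) (b (Suc s)) (d (Suc s)) \<kappa> = 0"
    using free_res_exact[OF F, of "Suc s" \<kappa>] by simp
  then have "\<forall>i\<in>{..<b s}. (\<Sum>j\<in>{..<b (Suc s)}. d (Suc s) i j * \<kappa> j) = 0"
    by (auto simp: mat_app_def fun_eq_iff)
  moreover have "\<kappa> j = (\<Sum>l<b (Suc (Suc s)). d (Suc (Suc s)) j l * c l)" for j
    unfolding \<kappa>_def mat_app_def by (rule sum.cong) (auto simp: c0_def)
  then have "\<forall>j\<in>{..<b (Suc s)}. v j - \<kappa> j \<in> max_ideal"
    using c by (auto simp: v0_def)
  ultimately show "\<exists>\<kappa>. (\<forall>i\<in>{..<b s}. (\<Sum>j\<in>{..<b (Suc s)}. d (Suc s) i j * \<kappa> j) = 0) \<and>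
      (\<forall>j\<in>{..<b (Suc s)}. v j - \<kappa> j \<in> max_ideal)" by blast
qed

theorem corollary3p14:
  fixes sc :: "'a::comm_ring_1 \<Rightarrow> 'b::ab_group_add \<Rightarrow> 'b"
    and scM :: "'a \<Rightarrow> 'c::ab_group_add \<Rightarrow> 'c"
    and N :: "'b set" and t :: nat
    and b :: "nat \<Rightarrow> nat" and d :: "nat \<Rightarrow> nat \<Rightarrow> nat \<Rightarrow> 'a" and eps :: "(nat \<Rightarrow> 'a) \<Rightarrow> 'c"
  assumes "noetherian_ring TYPE('a)" and "local_ring TYPE('a)"
    and "module sc" and "fin_gen sc"
    and "module.subspace sc N" and "burch_submodule sc N"
    and "t \<ge> 1"
    and "module scM" and "fin_gen scM"
    and "free_res scM b d eps"
    and "tor_quot_vanishes sc b d N t" and "tor_quot_vanishes sc b d N (Suc t)"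
  shows "pd_less scM t"
proof -
  obtain s where t: "t = Suc s" using \<open>t \<ge> 1\<close> by (cases t) auto
  have mi: "is_ideal (max_ideal::'a set)" using \<open>local_ring TYPE('a)\<close> by (simp add: local_ring_def)
  have "kernel_lifts_mod_max {..<b s} {..<b (Suc s)} (d (Suc s))"
    using tor_vanishing_kernel_lifts[OF \<open>module sc\<close> \<open>module.subspace sc N\<close>
        \<open>burch_submodule sc N\<close> \<open>free_res scM b d eps\<close>] assms(11,12) t by blast
  then obtain \<pi> where "complement_projection {..<b s} {..<b (Suc s)} (d (Suc s)) \<pi>"
    using complement_projection_exists[OF mi] by blast
  then show ?thesis
    using pd_less_of_complement_projection[OF \<open>free_res scM b d eps\<close>] t by blast
qed

end
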